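(* Let $n\ge 2$ and $\beta\in B_n$. Let $\hat\beta_n$ be the $(n-1)\times(n-1)$ matrix obtained from $\psi_n(\beta)$ by deleting its $n$-th row and $n$-th column. Then in $\Lambda=\mathbb{Z}[t^{\pm1}]$, $$(t^{-n}-1)\det(\hat\beta_n-I_{n-1})=(t^{-1}-1)\det(\psi_n^r(\beta)-I_{n-1}).$$
   Context: $\psi_n\colon B_n\to\mathrm{GL}_n(\Lambda)$ is the unreduced Burau representation: $\psi_n(\sigma_i)=I_{i-1}\oplus U\oplus I_{n-i-1}$ with $U=\left(\begin{smallmatrix}1-t&t\\1&0\end{smallmatrix}\right)$. Let $C_n=\sum_{1\le i\le j\le n}E_{i,j}$ be the upper triangular $n\times n$ matrix with all entries on and above the diagonal equal to $1$. For every $\beta\in B_n$ one has $C_n^{-1}\psi_n(\beta)C_n=\left(\begin{smallmatrix}\psi_n^r(\beta)&0_{n-1}\\ *_\beta&1\end{smallmatrix}\right)$ with $0_{n-1}$ a zero column, $*_\beta$ a row of length $n-1$, and $\psi_n^r(\beta)\in\mathrm{GL}_{n-1}(\Lambda)$; the map $\psi_n^r$ is the reduced Burau representation. $I_k$ is the $k\times k$ identity matrix. *)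

theory Defs
  imports "HOL-Computational_Algebra.Formal_Laurent_Series" "Jordan_Normal_Form.Determinant"
begin

(* Lambda = Z[t,t^-1] is realised inside the ring of integer formal Laurent series
   (an injective ring embedding), with t = fls_X and t^-1 = fls_X_inv. *)
type_synonym laurent = "int fls"

abbreviation tt :: laurent where "tt \<equiv> fls_X"
abbreviation tinv :: laurent where "tinv \<equiv> fls_X_inv"

(* A braid letter (i, True) stands for sigma_i, (i, False) for sigma_i^-1  (1 <= i <= n-1).
   Every braid in B_n is represented by such a word. *)
type_synonym braid_word = "(nat \<times> bool) list"

definition braid_word_ok :: "nat \<Rightarrow> braid_word \<Rightarrow> bool" where
  "braid_word_ok n w \<longleftrightarrow> (\<forall>(i, e) \<in> set w. 1 \<le> i \<and> i \<le> n - 1)"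

(* psi_n(sigma_i) = I_{i-1} (+) U (+) I_{n-i-1}, U = [[1-t, t],[1, 0]];
   psi_n(sigma_i^-1) = I_{i-1} (+) U^-1 (+) I_{n-i-1}, U^-1 = [[0, 1],[t^-1, 1-t^-1]].
   Matrix indices are 0-based, so U occupies rows/cols i-1, i. *)
definition burau_gen :: "nat \<Rightarrow> nat \<times> bool \<Rightarrow> laurent mat" where
  "burau_gen n l = (case l of (i, e) \<Rightarrow>
     mat n n (\<lambda>(a, b).
       if a = i - 1 \<and> b = i - 1 then (if e then 1 - tt else 0)
       else if a = i - 1 \<and> b = i then (if e then tt else 1)
       else if a = i \<and> b = i - 1 then (if e then 1 else tinv)
       else if a = i \<and> b = i then (if e then 0 else 1 - tinv)
       else if a = b then 1 else 0))"

definition burau :: "nat \<Rightarrow> braid_word \<Rightarrow> laurent mat" where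
  "burau n w = foldr (\<lambda>l M. burau_gen n l * M) w (1\<^sub>m n)"

definition C_mat :: "nat \<Rightarrow> laurent mat" where
  "C_mat n = mat n n (\<lambda>(i, j). if i \<le> j then 1 else 0)"

definition C_inv :: "nat \<Rightarrow> laurent mat" where
  "C_inv n = mat n n (\<lambda>(i, j). if i = j then 1 else if j = i + 1 then -1 else 0)"

definition burau_reduced :: "nat \<Rightarrow> braid_word \<Rightarrow> laurent mat" where
  "burau_reduced n w = (let M = C_inv n * burau n w * C_mat n in
     mat (n - 1) (n - 1) (\<lambda>(i, j). M $$ (i, j)))"

definition delete_last :: "nat \<Rightarrow> laurent mat \<Rightarrow> laurent mat" where
  "delete_last n M = mat (n - 1) (n - 1) (\<lambda>(i, j). M $$ (i, j))"

end

theory Submission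
  imports Defs
begin

text \<open>
  Put \<open>N = \<psi>\<^sub>n(\<beta>) - I\<close>. Each generator, hence every braid, fixes the row vector
  \<open>(1, t, \<dots>, t^(n-1))\<close> from the left and the column of ones from the right; so \<open>N\<close>
  has zero row sums and the left null vector \<open>v\<close> with \<open>v\<^sub>i = t^(i-n)\<close>, normalised by
  \<open>v\<^sub>n = 1\<close>. Add the column of ones to the last column of \<open>N\<close>. Replacing the last row
  by the combination of rows given by \<open>v\<close> leaves the row \<open>(0, \<dots>, 0, \<Sum> v\<^sub>i)\<close>, so the
  determinant of this matrix is \<open>(\<Sum> v\<^sub>i)\<close> times the leading minor of \<open>N\<close>. Conjugating by
  \<open>C\<^sub>n\<close> instead turns the added column into \<open>E\<^sub>n\<^sub>n\<close> and \<open>N\<close> into a matrix with zero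
  last column whose leading block is \<open>\<psi>\<^sup>r\<^sub>n(\<beta>) - I\<close>, so the same determinant is
  \<open>det(\<psi>\<^sup>r\<^sub>n(\<beta>) - I)\<close>. Finally \<open>(t\<^sup>-\<^sup>1 - 1) \<Sum> v\<^sub>i = t\<^sup>-\<^sup>n - 1\<close>.
\<close>

lemma tt_mult_tinv: "tt * tinv = 1"
  by (simp add: fls_X_inv_times_conv_shift fls_X_conv_shift_1 fls_shifted_times_simps)

lemma tinv_power_mult_tt_power: "tinv ^ k * tt ^ k = 1"
  by (metis power_mult_distrib power_one mult.commute tt_mult_tinv)

lemma tinv_power_minus_one:
  "tinv ^ Suc m - 1 = (tinv - 1) * (tinv ^ m * (\<Sum>i<Suc m. tt ^ i))"
proof -
  have "tinv - 1 = tinv * (1 - tt)"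
    using tt_mult_tinv by (simp add: algebra_simps)
  then have "(tinv - 1) * (tinv ^ m * (\<Sum>i<Suc m. tt ^ i))
      = tinv ^ Suc m * ((1 - tt) * (\<Sum>i<Suc m. tt ^ i))"
    by (simp add: ac_simps)
  also have "\<dots> = tinv ^ Suc m * (1 - tt ^ Suc m)"
    by (simp only: one_diff_power_eq)
  also have "\<dots> = tinv ^ Suc m - 1"
    using tinv_power_mult_tt_power[of "Suc m"] by (simp add: right_diff_distrib)
  finally show ?thesis by simp
qed

lemma index_mult_mat_sum:
  assumes "A \<in> carrier_mat nr k" "B \<in> carrier_mat k nc" "i < nr" "j < nc"
  shows "(A * B) $$ (i, j) = (\<Sum>c<k. A $$ (i, c) * B $$ (c, j))"
  using assms by (simp add: scalar_prod_def atLeast0LessThan)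

lemma fixed_row_vector_mult:
  fixes A B :: "'a::comm_semiring_1 mat"
  assumes A: "A \<in> carrier_mat n n" and B: "B \<in> carrier_mat n n"
    and xA: "\<And>k. k < n \<Longrightarrow> (\<Sum>a<n. x a * A $$ (a, k)) = x k"
    and xB: "\<And>k. k < n \<Longrightarrow> (\<Sum>a<n. x a * B $$ (a, k)) = x k"
    and k: "k < n"
  shows "(\<Sum>a<n. x a * (A * B) $$ (a, k)) = x k"
proof -
  have "(\<Sum>a<n. x a * (A * B) $$ (a, k)) = (\<Sum>a<n. \<Sum>c<n. x a * A $$ (a, c) * B $$ (c, k))"
    using k by (intro sum.cong refl)
      (simp add: index_mult_mat_sum[OF A B] sum_distrib_left mult.assoc del: index_mult_mat)
  also have "\<dots> = (\<Sum>c<n. (\<Sum>a<n. x a * A $$ (a, c)) * B $$ (c, k))"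
    by (subst sum.swap) (simp add: sum_distrib_right)
  also have "\<dots> = x k"
    using xA xB k by simp
  finally show ?thesis .
qed

lemma fixed_column_vector_mult:
  fixes A B :: "'a::comm_semiring_1 mat"
  assumes A: "A \<in> carrier_mat n n" and B: "B \<in> carrier_mat n n"
    and Ay: "\<And>a. a < n \<Longrightarrow> (\<Sum>b<n. A $$ (a, b) * y b) = y a"
    and By: "\<And>a. a < n \<Longrightarrow> (\<Sum>b<n. B $$ (a, b) * y b) = y a"
    and a: "a < n"
  shows "(\<Sum>b<n. (A * B) $$ (a, b) * y b) = y a"
proof -
  have "(\<Sum>b<n. (A * B) $$ (a, b) * y b) = (\<Sum>b<n. \<Sum>c<n. A $$ (a, c) * B $$ (c, b) * y b)"
    using a by (intro sum.cong refl) (simp add: index_mult_mat_sum[OF A B] sum_distrib_right del: index_mult_mat)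
  also have "\<dots> = (\<Sum>c<n. A $$ (a, c) * (\<Sum>b<n. B $$ (c, b) * y b))"
    by (subst sum.swap) (simp add: sum_distrib_left mult.assoc)
  also have "\<dots> = y a"
    using Ay By a by simp
  finally show ?thesis .
qed

lemma det_last_row_sparse:
  fixes M :: "'a::comm_ring_1 mat"
  assumes M: "M \<in> carrier_mat (Suc m) (Suc m)" and row: "\<And>j. j < m \<Longrightarrow> M $$ (m, j) = 0"
  shows "det M = M $$ (m, m) * det (mat_delete M m m)"
proof -
  have "det M = (\<Sum>j<Suc m. M $$ (m, j) * cofactor M m j)"
    using laplace_expansion_row[OF M] by simp
  also have "\<dots> = M $$ (m, m) * cofactor M m m"
    using row by simp
  finally show ?thesis
    by (simp add: cofactor_def)
qed

lemma det_last_column_sparse: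
  fixes M :: "'a::comm_ring_1 mat"
  assumes M: "M \<in> carrier_mat (Suc m) (Suc m)" and col: "\<And>i. i < m \<Longrightarrow> M $$ (i, m) = 0"
  shows "det M = M $$ (m, m) * det (mat_delete M m m)"
proof -
  have "mat_delete M\<^sup>T m m = (mat_delete M m m)\<^sup>T"
    using M by (intro eq_matI) (auto simp: mat_delete_def)
  then show ?thesis
    using det_last_row_sparse[of "M\<^sup>T" m] M col det_transpose[OF mat_delete_carrier[OF M]]
    by (simp add: det_transpose)
qed

definition last_column_mat :: "nat \<Rightarrow> (nat \<Rightarrow> 'a::zero) \<Rightarrow> 'a mat" where
  "last_column_mat m u = mat (Suc m) (Suc m) (\<lambda>(i, j). if j = m then u i else 0)"

lemma det_add_last_column_mat:
  fixes A :: "'a::comm_ring_1 mat"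
  assumes A: "A \<in> carrier_mat (Suc m) (Suc m)" and vm: "v m = 1"
    and vA: "\<And>j. j < Suc m \<Longrightarrow> (\<Sum>i<Suc m. v i * A $$ (i, j)) = 0"
  shows "det (A + last_column_mat m u) = (\<Sum>i<Suc m. v i * u i) * det (mat_delete A m m)"
proof -
  define E where "E = mat (Suc m) (Suc m) (\<lambda>(i, j). if i = m then v j else if i = j then 1 else 0)"
  define P where "P = A + last_column_mat m u"
  have E: "E \<in> carrier_mat (Suc m) (Suc m)" and P: "P \<in> carrier_mat (Suc m) (Suc m)"
    using A by (auto simp: E_def P_def last_column_mat_def)
  have "mat_delete E m m = 1\<^sub>m m"
    by (intro eq_matI) (auto simp: mat_delete_def E_def)
  then have det_E: "det E = 1"
    using det_last_column_sparse[OF E] by (simp add: E_def vm)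
  have EP_last_row: "(E * P) $$ (m, j) = (if j = m then (\<Sum>i<Suc m. v i * u i) else 0)"
    if "j < Suc m" for j
    using that index_mult_mat_sum[OF E P, of m j] vA[OF that] A
    by (simp add: E_def P_def last_column_mat_def distrib_left sum.distrib)
  have P_left: "P $$ (i, j) = A $$ (i, j)" if "i < Suc m" "j < m" for i j
    using that A by (simp add: P_def last_column_mat_def)
  have EP_upper_rows: "(E * P) $$ (i, j) = P $$ (i, j)" if "i < m" "j < Suc m" for i j
  proof -
    have "(E * P) $$ (i, j) = (\<Sum>c<Suc m. E $$ (i, c) * P $$ (c, j))"
      using that by (intro index_mult_mat_sum[OF E P]) auto
    also have "\<dots> = (\<Sum>c<Suc m. if c = i then P $$ (c, j) else 0)"
      using that by (intro sum.cong) (auto simp: E_def)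
    finally show ?thesis
      using that by simp
  qed
  have "mat_delete (E * P) m m = mat_delete A m m"
    using A E P by (intro eq_matI)
      (auto simp: mat_delete_def EP_upper_rows P_left carrier_matD[OF mult_carrier_mat[OF E P]]
        simp del: index_mult_mat)
  then have "det (E * P) = (\<Sum>i<Suc m. v i * u i) * det (mat_delete A m m)"
    using det_last_row_sparse[of "E * P" m] E P EP_last_row by simp
  then show ?thesis
    using det_mult[OF E P] det_E by (simp add: P_def)
qed

lemma sum_lessThan_remove_pair:
  fixes f :: "nat \<Rightarrow> 'a::comm_monoid_add"
  assumes "Suc j < n"
  shows "(\<Sum>a<n. f a) = f j + f (Suc j) + (\<Sum>a\<in>{..<n} - {j, Suc j}. f a)"
  using assms sum.subset_diff[of "{j, Suc j}" "{..<n}" f] by (simp add: add.commute)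

lemma burau_gen_fixes_powers:
  assumes "1 \<le> i" "i < n" "k < n"
  shows "(\<Sum>a<n. tt ^ a * burau_gen n (i, e) $$ (a, k)) = tt ^ k"
proof -
  obtain j where i: "i = Suc j" using assms(1) by (cases i) auto
  let ?f = "\<lambda>a. tt ^ a * burau_gen n (i, e) $$ (a, k)"
  have "(\<Sum>a<n. ?f a) = ?f j + ?f (Suc j) + (\<Sum>a\<in>{..<n} - {j, Suc j}. ?f a)"
    using assms i by (intro sum_lessThan_remove_pair) simp
  also have "(\<Sum>a\<in>{..<n} - {j, Suc j}. ?f a) = (\<Sum>a\<in>{..<n} - {j, Suc j}. if a = k then tt ^ k else 0)"
    using assms i by (intro sum.cong) (auto simp: burau_gen_def)
  also have "\<dots> = (if k \<noteq> j \<and> k \<noteq> Suc j then tt ^ k else 0)"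
    using assms by simp
  also have "?f j + ?f (Suc j) + (if k \<noteq> j \<and> k \<noteq> Suc j then tt ^ k else 0) = tt ^ k"
  proof -
    have tt_tinv: "tt ^ j * tt * tinv = tt ^ j"
      using tt_mult_tinv by (simp add: mult.assoc)
    consider "k = j" | "k = Suc j" | "k \<noteq> j" "k \<noteq> Suc j" by blast
    then show ?thesis
      using assms i tt_tinv by cases (cases e; simp add: burau_gen_def algebra_simps)+
  qed
  finally show ?thesis .
qed

lemma burau_gen_row_sum:
  assumes "1 \<le> i" "i < n" "a < n"
  shows "(\<Sum>b<n. burau_gen n (i, e) $$ (a, b)) = 1"
proof -
  obtain j where i: "i = Suc j" using assms(1) by (cases i) auto
  let ?f = "\<lambda>b. burau_gen n (i, e) $$ (a, b)"
  have "(\<Sum>b<n. ?f b) = ?f j + ?f (Suc j) + (\<Sum>b\<in>{..<n} - {j, Suc j}. ?f b)"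
    using assms i by (intro sum_lessThan_remove_pair) simp
  also have "(\<Sum>b\<in>{..<n} - {j, Suc j}. ?f b) = (\<Sum>b\<in>{..<n} - {j, Suc j}. if b = a then 1 else 0)"
    using assms i by (intro sum.cong) (auto simp: burau_gen_def)
  also have "\<dots> = (if a \<noteq> j \<and> a \<noteq> Suc j then 1 else 0)"
    using assms by simp
  also have "?f j + ?f (Suc j) + (if a \<noteq> j \<and> a \<noteq> Suc j then 1 else 0) = 1"
    using assms i by (cases "a = j \<or> a = Suc j"; cases e) (auto simp: burau_gen_def)
  finally show ?thesis .
qed

lemma burau_gen_carrier: "burau_gen n l \<in> carrier_mat n n"
  by (simp add: burau_gen_def split: prod.splits)

lemma burau_Cons: "burau n (l # w) = burau_gen n l * burau n w"
  by (simp add: burau_def)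

lemma burau_carrier: "burau n w \<in> carrier_mat n n"
  by (induction w) (auto simp: burau_def intro!: mult_carrier_mat[OF burau_gen_carrier])

lemma braid_word_ok_Cons:
  "braid_word_ok n ((i, e) # w) \<longleftrightarrow> 1 \<le> i \<and> i < n \<and> braid_word_ok n w"
  by (auto simp: braid_word_ok_def)

lemma burau_fixes_powers:
  assumes "braid_word_ok n w" "k < n"
  shows "(\<Sum>a<n. tt ^ a * burau n w $$ (a, k)) = tt ^ k"
  using assms
proof (induction w arbitrary: k)
  case Nil
  have "(\<Sum>a<n. tt ^ a * 1\<^sub>m n $$ (a, k)) = (\<Sum>a<n. if a = k then tt ^ k else 0)"
    using Nil by (intro sum.cong) auto
  then show ?case
    using Nil by (simp add: burau_def)
next
  case (Cons l w)
  obtain i e where l: "l = (i, e)" by (cases l)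
  show ?case
    unfolding burau_Cons
    using Cons l by (intro fixed_row_vector_mult[OF burau_gen_carrier burau_carrier])
      (auto simp: braid_word_ok_Cons burau_gen_fixes_powers)
qed

lemma burau_row_sum:
  assumes "braid_word_ok n w" "a < n"
  shows "(\<Sum>b<n. burau n w $$ (a, b)) = 1"
  using assms
proof (induction w arbitrary: a)
  case Nil
  then show ?case by (simp add: burau_def)
next
  case (Cons l w)
  obtain i e where l: "l = (i, e)" by (cases l)
  have "(\<Sum>b<n. (burau_gen n l * burau n w) $$ (a, b) * 1) = 1"
    using Cons l by (intro fixed_column_vector_mult[OF burau_gen_carrier burau_carrier])
      (auto simp: braid_word_ok_Cons burau_gen_row_sum)
  then show ?case
    by (simp add: burau_Cons)
qed

lemma burau_minus_one_fixes_powers: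
  assumes "braid_word_ok n w" "j < n"
  shows "(\<Sum>i<n. tt ^ i * (burau n w - 1\<^sub>m n) $$ (i, j)) = 0"
proof -
  have "(\<Sum>i<n. tt ^ i * (burau n w - 1\<^sub>m n) $$ (i, j))
      = (\<Sum>i<n. tt ^ i * burau n w $$ (i, j) - (if i = j then tt ^ j else 0))"
    using assms burau_carrier[of n w] by (intro sum.cong) (auto simp: right_diff_distrib)
  then show ?thesis
    using assms by (simp add: sum_subtractf burau_fixes_powers)
qed

lemma burau_minus_one_row_sum:
  assumes "braid_word_ok n w" "a < n"
  shows "(\<Sum>b<n. (burau n w - 1\<^sub>m n) $$ (a, b)) = 0"
proof -
  have "(\<Sum>b<n. (burau n w - 1\<^sub>m n) $$ (a, b))
      = (\<Sum>b<n. burau n w $$ (a, b)) - (\<Sum>b<n. if a = b then 1 else 0)"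
    using assms burau_carrier[of n w] by (simp add: sum_subtractf)
  then show ?thesis
    using assms by (simp add: burau_row_sum)
qed

lemma C_inv_carrier: "C_inv n \<in> carrier_mat n n"
  by (simp add: C_inv_def)

lemma C_mat_carrier: "C_mat n \<in> carrier_mat n n"
  by (simp add: C_mat_def)

lemma index_C_inv_mult:
  assumes X: "X \<in> carrier_mat n k" and "i < n" "j < k"
  shows "(C_inv n * X) $$ (i, j) = X $$ (i, j) - (if Suc i < n then X $$ (Suc i, j) else 0)"
proof -
  have "(C_inv n * X) $$ (i, j) = (\<Sum>c<n. C_inv n $$ (i, c) * X $$ (c, j))"
    using assms by (intro index_mult_mat_sum[OF C_inv_carrier X])
  also have "\<dots> = (\<Sum>c<n. (if c = i then X $$ (c, j) else 0) - (if c = Suc i then X $$ (c, j) else 0))"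
    using assms by (intro sum.cong) (auto simp: C_inv_def)
  finally show ?thesis
    using assms by (simp add: sum_subtractf)
qed

lemma index_mult_C_mat:
  assumes X: "X \<in> carrier_mat nr n" and "i < nr" "j < n"
  shows "(X * C_mat n) $$ (i, j) = (\<Sum>c<Suc j. X $$ (i, c))"
proof -
  have "(X * C_mat n) $$ (i, j) = (\<Sum>c<n. X $$ (i, c) * C_mat n $$ (c, j))"
    using assms by (intro index_mult_mat_sum[OF X C_mat_carrier])
  also have "\<dots> = (\<Sum>c<Suc j. X $$ (i, c) * C_mat n $$ (c, j))"
    using assms by (intro sum.mono_neutral_right) (auto simp: C_mat_def)
  also have "\<dots> = (\<Sum>c<Suc j. X $$ (i, c))"
    using assms by (intro sum.cong) (auto simp: C_mat_def)
  finally show ?thesis .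
qed

lemma C_inv_mult_C_mat: "C_inv n * C_mat n = 1\<^sub>m n"
proof (rule eq_matI)
  fix i j assume "i < dim_row (1\<^sub>m n)" "j < dim_col (1\<^sub>m n)"
  then show "(C_inv n * C_mat n) $$ (i, j) = 1\<^sub>m n $$ (i, j)"
    by (simp add: index_C_inv_mult[OF C_mat_carrier]) (simp add: C_mat_def)
qed (use C_inv_carrier[of n] C_mat_carrier[of n] in auto)

lemma det_C_conj:
  assumes "X \<in> carrier_mat n n"
  shows "det (C_inv n * X * C_mat n) = det X"
proof -
  have "det (C_inv n * X * C_mat n) = det X * det (C_inv n * C_mat n)"
    using assms C_inv_carrier[of n] C_mat_carrier[of n]
    by (simp add: det_mult[of _ n] ac_simps)
  then show ?thesis
    by (simp add: C_inv_mult_C_mat)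
qed

lemma C_conj_last_column_ones:
  "C_inv (Suc m) * last_column_mat m (\<lambda>_. 1) * C_mat (Suc m)
     = mat (Suc m) (Suc m) (\<lambda>(i, j). if i = m \<and> j = m then 1 else 0)"
  (is "?Ci * ?L * ?C = ?K")
proof -
  have L: "?L \<in> carrier_mat (Suc m) (Suc m)"
    by (simp add: last_column_mat_def)
  have CL: "?Ci * ?L \<in> carrier_mat (Suc m) (Suc m)"
    using C_inv_carrier L by (rule mult_carrier_mat)
  have "(?Ci * ?L) $$ (i, j) = (if i = m \<and> j = m then 1 else 0)" if "i < Suc m" "j < Suc m" for i j
    using that by (subst index_C_inv_mult[OF L that]) (simp add: last_column_mat_def)
  then show ?thesis
    by (intro eq_matI) (auto simp: index_mult_C_mat[OF CL] carrier_matD[OF mult_carrier_mat[OF CL C_mat_carrier]]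
        simp del: index_mult_mat)
qed

lemma det_mat_delete_C_conj:
  fixes A :: "laurent mat"
  assumes A: "A \<in> carrier_mat (Suc m) (Suc m)"
    and rows: "\<And>a. a < Suc m \<Longrightarrow> (\<Sum>b<Suc m. A $$ (a, b)) = 0"
  shows "det (mat_delete (C_inv (Suc m) * A * C_mat (Suc m)) m m)
      = det (A + last_column_mat m (\<lambda>_. 1))"
proof -
  let ?Ci = "C_inv (Suc m)" and ?C = "C_mat (Suc m)" and ?L = "last_column_mat m (\<lambda>_. 1::laurent)"
  define D where "D = ?Ci * A * ?C"
  define K where "K = mat (Suc m) (Suc m) (\<lambda>(i, j). if i = m \<and> j = m then 1 else (0::laurent))"
  have CiA: "?Ci * A \<in> carrier_mat (Suc m) (Suc m)"
    using C_inv_carrier A by (rule mult_carrier_mat)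
  have D: "D \<in> carrier_mat (Suc m) (Suc m)"
    unfolding D_def using CiA C_mat_carrier by (rule mult_carrier_mat)
  have L: "?L \<in> carrier_mat (Suc m) (Suc m)"
    by (simp add: last_column_mat_def)
  have D_last_column: "D $$ (i, m) = 0" if "i < Suc m" for i
  proof -
    have "D $$ (i, m) = (\<Sum>c<Suc m. A $$ (i, c) - (if Suc i < Suc m then A $$ (Suc i, c) else 0))"
      unfolding D_def using that
      by (simp add: index_mult_C_mat[OF CiA] index_C_inv_mult[OF A] del: index_mult_mat)
    also have "\<dots> = 0"
      using that rows[of i] rows[of "Suc i"]
      by (cases "Suc i < Suc m") (simp_all add: sum_subtractf del: sum.lessThan_Suc)
    finally show ?thesis .
  qed
  have "?Ci * (A + ?L) = ?Ci * A + ?Ci * ?L"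
    by (rule mult_add_distrib_mat[OF C_inv_carrier A L])
  then have conj: "?Ci * (A + ?L) * ?C = D + K"
    using add_mult_distrib_mat[OF CiA mult_carrier_mat[OF C_inv_carrier L] C_mat_carrier]
    by (simp add: D_def K_def C_conj_last_column_ones)
  have "det (A + ?L) = det (?Ci * (A + ?L) * ?C)"
    by (rule det_C_conj[OF add_carrier_mat[OF L], symmetric])
  also have "\<dots> = det (D + K)"
    by (simp only: conj)
  also have "\<dots> = det (mat_delete D m m)"
  proof -
    have "mat_delete (D + K) m m = mat_delete D m m"
      using D by (intro eq_matI) (auto simp: mat_delete_def K_def)
    then show ?thesis
      using det_last_column_sparse[of "D + K" m] D D_last_column by (simp add: K_def)
  qed
  finally show ?thesis
    by (simp add: D_def)
qed

lemma delete_last_minus_one: "delete_last (Suc m) (A - 1\<^sub>m (Suc m)) = delete_last (Suc m) A - 1\<^sub>m m"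
  by (rule eq_matI) (auto simp: delete_last_def)

lemma delete_last_eq_mat_delete:
  "M \<in> carrier_mat (Suc m) (Suc m) \<Longrightarrow> delete_last (Suc m) M = mat_delete M m m"
  by (intro eq_matI) (auto simp: delete_last_def mat_delete_def)

lemma burau_reduced_minus_one:
  "burau_reduced (Suc m) w - 1\<^sub>m m
     = mat_delete (C_inv (Suc m) * (burau (Suc m) w - 1\<^sub>m (Suc m)) * C_mat (Suc m)) m m"
proof -
  let ?Ci = "C_inv (Suc m)" and ?C = "C_mat (Suc m)" and ?B = "burau (Suc m) w"
  have B: "?B \<in> carrier_mat (Suc m) (Suc m)" and Ci: "?Ci \<in> carrier_mat (Suc m) (Suc m)"
    and C: "?C \<in> carrier_mat (Suc m) (Suc m)"
    by (rule burau_carrier, rule C_inv_carrier, rule C_mat_carrier)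
  have "?Ci * (?B - 1\<^sub>m (Suc m)) * ?C = (?Ci * ?B - ?Ci) * ?C"
    using Ci B by (simp add: mult_minus_distrib_mat[OF Ci B] right_mult_one_mat)
  also have "\<dots> = ?Ci * ?B * ?C - 1\<^sub>m (Suc m)"
    using Ci B C by (simp add: minus_mult_distrib_mat[of _ "Suc m" "Suc m"] C_inv_mult_C_mat)
  finally have conj_minus_one: "?Ci * (?B - 1\<^sub>m (Suc m)) * ?C = ?Ci * ?B * ?C - 1\<^sub>m (Suc m)" .
  have X: "?Ci * ?B * ?C - 1\<^sub>m (Suc m) \<in> carrier_mat (Suc m) (Suc m)"
    by (rule minus_carrier_mat) simp
  have "burau_reduced (Suc m) w - 1\<^sub>m m = delete_last (Suc m) (?Ci * ?B * ?C) - 1\<^sub>m m"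
    by (simp add: burau_reduced_def delete_last_def)
  also have "\<dots> = delete_last (Suc m) (?Ci * ?B * ?C - 1\<^sub>m (Suc m))"
    by (simp only: delete_last_minus_one)
  also have "\<dots> = mat_delete (?Ci * (?B - 1\<^sub>m (Suc m)) * ?C) m m"
    unfolding delete_last_eq_mat_delete[OF X] conj_minus_one by (rule refl)
  finally show ?thesis .
qed

theorem lemma2:
  fixes n :: nat and w :: braid_word
  assumes "n \<ge> 2" and "braid_word_ok n w"
  shows "(tinv ^ n - 1) * det (delete_last n (burau n w) - 1\<^sub>m (n - 1))
       = (tinv - 1) * det (burau_reduced n w - 1\<^sub>m (n - 1))"
proof -
  obtain m where n: "n = Suc m" using assms(1) by (cases n) auto
  define N where "N = burau n w - 1\<^sub>m n"
  have N: "N \<in> carrier_mat (Suc m) (Suc m)"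
    unfolding N_def n by (rule minus_carrier_mat) simp
  have N_left_null: "(\<Sum>i<Suc m. tinv ^ m * tt ^ i * N $$ (i, j)) = 0" if "j < Suc m" for j
    using burau_minus_one_fixes_powers[OF assms(2), of j] that
    by (simp add: n N_def mult.assoc sum_distrib_left[symmetric])
  have N_row_sums: "(\<Sum>b<Suc m. N $$ (a, b)) = 0" if "a < Suc m" for a
    using burau_minus_one_row_sum[OF assms(2), of a] that by (simp add: n N_def)
  let ?P = "N + last_column_mat m (\<lambda>_. 1)"
  have "det ?P = (\<Sum>i<Suc m. tinv ^ m * tt ^ i * 1) * det (mat_delete N m m)"
    using N_left_null tinv_power_mult_tt_power by (intro det_add_last_column_mat[OF N])
  then have "det ?P = tinv ^ m * (\<Sum>i<Suc m. tt ^ i) * det (mat_delete N m m)"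
    by (simp only: mult_1_right sum_distrib_left)
  moreover have "det ?P = det (burau_reduced n w - 1\<^sub>m (n - 1))"
    using det_mat_delete_C_conj[OF N N_row_sums] by (simp add: burau_reduced_minus_one n N_def)
  moreover have "delete_last n (burau n w) - 1\<^sub>m (n - 1) = mat_delete N m m"
    unfolding n diff_Suc_1 delete_last_minus_one[symmetric] N_def[unfolded n, symmetric]
    using N by (rule delete_last_eq_mat_delete)
  ultimately show ?thesis
    using tinv_power_minus_one[of m] by (simp add: n mult.assoc)
qed

end
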